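(* Let $G$ be a group, let $S=\bigoplus_{g\in G}S_g$ be an epsilon-strongly $G$-graded ring, and let $I$ be a homogeneous ideal of $S$. Then the natural $G$-grading $S/I=\bigoplus_{g\in G}(S_g+I)/I$ of the factor ring is epsilon-strong.
   Context: Rings are associative, not necessarily unital; $XY$ denotes finite sums of products. A $G$-grading: $S=\bigoplus_gS_g$, $S_gS_h\subseteq S_{gh}$. The grading is epsilon-strong if $S_gS_{g^{-1}}S_g=S_g$ for all $g$ and each ring $S_gS_{g^{-1}}$ has a multiplicative identity element. An ideal $I$ is homogeneous if $I=\bigoplus_{g\in G}(I\cap S_g)$. *)

theory Defs
  imports "HOL-Algebra.QuotRing"
begin

text \<open>We use HOL-Algebra's ring
record (the field one is simply ignored) and define non-unital rings, ideals,
products of subsets (finite sums of products), gradings and epsilon-strong gradings.\<close>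

definition nonunital_ring :: "('a, 'b) ring_scheme \<Rightarrow> bool" where
  "nonunital_ring R \<longleftrightarrow> abelian_group R \<and>
     (\<forall>x\<in>carrier R. \<forall>y\<in>carrier R. x \<otimes>\<^bsub>R\<^esub> y \<in> carrier R) \<and>
     (\<forall>x\<in>carrier R. \<forall>y\<in>carrier R. \<forall>z\<in>carrier R.
        (x \<otimes>\<^bsub>R\<^esub> y) \<otimes>\<^bsub>R\<^esub> z = x \<otimes>\<^bsub>R\<^esub> (y \<otimes>\<^bsub>R\<^esub> z)) \<and>
     (\<forall>x\<in>carrier R. \<forall>y\<in>carrier R. \<forall>z\<in>carrier R.
        (x \<oplus>\<^bsub>R\<^esub> y) \<otimes>\<^bsub>R\<^esub> z = x \<otimes>\<^bsub>R\<^esub> z \<oplus>\<^bsub>R\<^esub> y \<otimes>\<^bsub>R\<^esub> z \<and>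
        z \<otimes>\<^bsub>R\<^esub> (x \<oplus>\<^bsub>R\<^esub> y) = z \<otimes>\<^bsub>R\<^esub> x \<oplus>\<^bsub>R\<^esub> z \<otimes>\<^bsub>R\<^esub> y)"

definition nonunital_ideal :: "'a set \<Rightarrow> ('a, 'b) ring_scheme \<Rightarrow> bool" where
  "nonunital_ideal I R \<longleftrightarrow> additive_subgroup I R \<and>
     (\<forall>a\<in>I. \<forall>x\<in>carrier R. x \<otimes>\<^bsub>R\<^esub> a \<in> I \<and> a \<otimes>\<^bsub>R\<^esub> x \<in> I)"

definition ring_subset_prod :: "('a, 'b) ring_scheme \<Rightarrow> 'a set \<Rightarrow> 'a set \<Rightarrow> 'a set" where
  "ring_subset_prod R X Y = {finsum R (\<lambda>i. f i \<otimes>\<^bsub>R\<^esub> h i) {..<(n::nat)} | n f h.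
                        \<forall>i<n. f i \<in> X \<and> h i \<in> Y}"

definition graded :: "('a, 'b) ring_scheme \<Rightarrow> ('g, 'c) monoid_scheme \<Rightarrow> ('g \<Rightarrow> 'a set) \<Rightarrow> bool" where
  "graded R G A \<longleftrightarrow>
     (\<forall>g\<in>carrier G. additive_subgroup (A g) R) \<and>
     (\<forall>g\<in>carrier G. \<forall>h\<in>carrier G. ring_subset_prod R (A g) (A h) \<subseteq> A (g \<otimes>\<^bsub>G\<^esub> h)) \<and>
     (\<forall>x\<in>carrier R. \<exists>F f. finite F \<and> F \<subseteq> carrier G \<and> (\<forall>g\<in>F. f g \<in> A g) \<and>
        x = finsum R f F) \<and>
     (\<forall>F f. finite F \<and> F \<subseteq> carrier G \<and> (\<forall>g\<in>F. f g \<in> A g) \<and> finsum R f F = \<zero>\<^bsub>R\<^esub>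
        \<longrightarrow> (\<forall>g\<in>F. f g = \<zero>\<^bsub>R\<^esub>))"

definition epsilon_strong :: "('a, 'b) ring_scheme \<Rightarrow> ('g, 'c) monoid_scheme \<Rightarrow> ('g \<Rightarrow> 'a set) \<Rightarrow> bool" where
  "epsilon_strong R G A \<longleftrightarrow> graded R G A \<and>
     (\<forall>g\<in>carrier G.
        ring_subset_prod R (ring_subset_prod R (A g) (A (inv\<^bsub>G\<^esub> g))) (A g) = A g \<and>
        (\<exists>e\<in>ring_subset_prod R (A g) (A (inv\<^bsub>G\<^esub> g)).
           \<forall>x\<in>ring_subset_prod R (A g) (A (inv\<^bsub>G\<^esub> g)). e \<otimes>\<^bsub>R\<^esub> x = x \<and> x \<otimes>\<^bsub>R\<^esub> e = x))"

definition homogeneous_ideal :: "('a, 'b) ring_scheme \<Rightarrow> ('g, 'c) monoid_scheme \<Rightarrow> ('g \<Rightarrow> 'a set) \<Rightarrow> 'a set \<Rightarrow> bool" where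
  "homogeneous_ideal R G A I \<longleftrightarrow>
     (\<forall>x\<in>I. \<exists>F f. finite F \<and> F \<subseteq> carrier G \<and> (\<forall>g\<in>F. f g \<in> I \<inter> A g) \<and> x = finsum R f F)"

definition quot_grading :: "('a, 'b) ring_scheme \<Rightarrow> ('g \<Rightarrow> 'a set) \<Rightarrow> 'a set \<Rightarrow> 'g \<Rightarrow> 'a set set" where
  "quot_grading R A I g = (\<lambda>a. I +>\<^bsub>R\<^esub> a) ` A g"

end

theory Submission
  imports Defs
begin

text \<open>The canonical projection \<open>x \<mapsto> I +> x\<close> onto \<open>S/I\<close> is additive and multiplicative,
so it maps every set \<open>XY\<close> of sums of products onto the corresponding set of products of
the images. Hence the components \<open>(S_g + I)/I\<close> inherit \<open>S_g S_h \<subseteq> S_gh\<close> and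
\<open>S_g S_g\<inverse> S_g = S_g\<close>, and the identity element of \<open>S_g S_g\<inverse>\<close> projects to one of its image.
Homogeneity of \<open>I\<close> is needed only for the directness of the sum: if a sum of homogeneous
elements lies in \<open>I\<close>, comparing it with a decomposition of the same element into
homogeneous elements of \<open>I\<close> shows, by uniqueness of homogeneous components, that every
summand lies in \<open>I\<close>.\<close>

lemma ring_subset_prodI:
  "\<forall>i<n. f i \<in> X \<and> h i \<in> Y \<Longrightarrow>
    finsum R (\<lambda>i. f i \<otimes>\<^bsub>R\<^esub> h i) {..<(n::nat)} \<in> ring_subset_prod R X Y"
  unfolding ring_subset_prod_def by blast

lemma ring_subset_prodE:
  assumes "z \<in> ring_subset_prod R X Y"
  obtains n f h where "z = finsum R (\<lambda>i. f i \<otimes>\<^bsub>R\<^esub> h i) {..<(n::nat)}"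
    "\<forall>i<n. f i \<in> X \<and> h i \<in> Y"
  using assms unfolding ring_subset_prod_def by blast

lemma graded_additive_subgroup:
  "graded S G A \<Longrightarrow> g \<in> carrier G \<Longrightarrow> additive_subgroup (A g) S"
  by (simp add: graded_def)

lemma graded_subset_carrier:
  "graded S G A \<Longrightarrow> g \<in> carrier G \<Longrightarrow> A g \<subseteq> carrier S"
  by (rule additive_subgroup.a_subset[OF graded_additive_subgroup])

lemma graded_ring_subset_prod:
  "graded S G A \<Longrightarrow> g \<in> carrier G \<Longrightarrow> h \<in> carrier G \<Longrightarrow>
    ring_subset_prod S (A g) (A h) \<subseteq> A (g \<otimes>\<^bsub>G\<^esub> h)"
  by (simp add: graded_def)

lemma graded_decomposition:
  assumes "graded S G A" "x \<in> carrier S"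
  obtains F f where "finite F" "F \<subseteq> carrier G" "\<forall>g\<in>F. f g \<in> A g" "x = finsum S f F"
proof -
  have "\<exists>F f. finite F \<and> F \<subseteq> carrier G \<and> (\<forall>g\<in>F. f g \<in> A g) \<and> x = finsum S f F"
    using assms by (simp add: graded_def)
  then show ?thesis using that by blast
qed

lemma graded_components_zero:
  "graded S G A \<Longrightarrow> finite F \<Longrightarrow> F \<subseteq> carrier G \<Longrightarrow> \<forall>g\<in>F. f g \<in> A g \<Longrightarrow>
    finsum S f F = \<zero>\<^bsub>S\<^esub> \<Longrightarrow> g \<in> F \<Longrightarrow> f g = \<zero>\<^bsub>S\<^esub>"
  unfolding graded_def by (elim conjE allE impE) auto

lemma epsilon_strong_graded: "epsilon_strong S G A \<Longrightarrow> graded S G A"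
  by (simp add: epsilon_strong_def)

lemma epsilon_strong_ring_subset_prod_eq:
  "epsilon_strong S G A \<Longrightarrow> g \<in> carrier G \<Longrightarrow>
    ring_subset_prod S (ring_subset_prod S (A g) (A (inv\<^bsub>G\<^esub> g))) (A g) = A g"
  by (simp add: epsilon_strong_def)

lemma epsilon_strong_identity:
  assumes "epsilon_strong S G A" "g \<in> carrier G"
  obtains e where "e \<in> ring_subset_prod S (A g) (A (inv\<^bsub>G\<^esub> g))"
    "\<forall>x\<in>ring_subset_prod S (A g) (A (inv\<^bsub>G\<^esub> g)). e \<otimes>\<^bsub>S\<^esub> x = x \<and> x \<otimes>\<^bsub>S\<^esub> e = x"
  using assms unfolding epsilon_strong_def by blast

lemma graded_components_unique:
  assumes S: "abelian_group S" and gr: "graded S G A"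
    and U: "finite U" "U \<subseteq> carrier G"
    and ab: "\<forall>g\<in>U. a g \<in> A g \<and> b g \<in> A g"
    and eq: "finsum S a U = finsum S b U"
  shows "\<forall>g\<in>U. a g = b g"
proof -
  interpret abelian_group S by (fact S)
  have sub: "\<And>g. g \<in> U \<Longrightarrow> additive_subgroup (A g) S"
    using U graded_additive_subgroup[OF gr] by auto
  have "\<And>g. g \<in> U \<Longrightarrow> A g \<subseteq> carrier S"
    using U graded_subset_carrier[OF gr] by auto
  then have aS: "a \<in> U \<rightarrow> carrier S" and bS: "b \<in> U \<rightarrow> carrier S"
    using ab by fastforce+
  define d where "d g = a g \<ominus>\<^bsub>S\<^esub> b g" for g
  have dA: "\<forall>g\<in>U. d g \<in> A g"
    using ab sub unfolding d_def a_minus_def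
    by (meson additive_subgroup.a_closed additive_subgroup.a_inv_closed)
  have dS: "d \<in> U \<rightarrow> carrier S" using aS bS unfolding d_def by auto
  have a_split: "a g = d g \<oplus>\<^bsub>S\<^esub> b g" if "g \<in> U" for g
    using aS bS that unfolding d_def a_minus_def by (simp add: Pi_iff a_assoc l_neg)
  have "finsum S a U = finsum S (\<lambda>g. d g \<oplus>\<^bsub>S\<^esub> b g) U"
    using dS bS a_split by (intro finsum_cong') auto
  also have "\<dots> = finsum S d U \<oplus>\<^bsub>S\<^esub> finsum S b U"
    using dS bS by (rule finsum_addf)
  finally have "finsum S d U = \<zero>\<^bsub>S\<^esub>" using eq dS bS by simp
  then have "\<forall>g\<in>U. d g = \<zero>\<^bsub>S\<^esub>" using graded_components_zero[OF gr U dA] by blast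
  then show ?thesis using a_split bS by (auto simp: Pi_iff)
qed

lemma homogeneous_ideal_components_mem:
  assumes S: "abelian_group S" and gr: "graded S G A"
    and hom: "homogeneous_ideal S G A I" and I: "additive_subgroup I S"
    and F: "finite F" "F \<subseteq> carrier G" "\<forall>g\<in>F. f g \<in> A g"
    and sum_in: "finsum S f F \<in> I"
  shows "\<forall>g\<in>F. f g \<in> I"
proof -
  interpret abelian_group S by (fact S)
  obtain F' k where F': "finite F'" "F' \<subseteq> carrier G" "\<forall>g\<in>F'. k g \<in> I \<inter> A g"
    and sum_eq: "finsum S f F = finsum S k F'"
    using hom sum_in unfolding homogeneous_ideal_def by meson
  define U where "U = F \<union> F'"
  define a where "a g = (if g \<in> F then f g else \<zero>\<^bsub>S\<^esub>)" for g
  define b where "b g = (if g \<in> F' then k g else \<zero>\<^bsub>S\<^esub>)" for g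
  have U: "finite U" "U \<subseteq> carrier G" using F F' unfolding U_def by auto
  have sub: "\<And>g. g \<in> U \<Longrightarrow> additive_subgroup (A g) S"
    using U graded_additive_subgroup[OF gr] by auto
  have ab: "\<forall>g\<in>U. a g \<in> A g \<and> b g \<in> A g"
    using F F' sub additive_subgroup.zero_closed unfolding a_def b_def by fastforce
  moreover have "\<And>g. g \<in> U \<Longrightarrow> A g \<subseteq> carrier S"
    using U graded_subset_carrier[OF gr] by auto
  ultimately have aS: "a \<in> U \<rightarrow> carrier S" and bS: "b \<in> U \<rightarrow> carrier S"
    by fastforce+
  have "finsum S a U = finsum S f F"
    by (rule add.finprod_mono_neutral_cong_right) (use U aS in \<open>auto simp: U_def a_def\<close>)
  moreover have "finsum S b U = finsum S k F'"
    by (rule add.finprod_mono_neutral_cong_right) (use U bS in \<open>auto simp: U_def b_def\<close>)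
  ultimately have "\<forall>g\<in>U. a g = b g"
    using graded_components_unique[OF S gr U ab] sum_eq by simp
  moreover have "\<forall>g\<in>U. b g \<in> I"
    using F' additive_subgroup.zero_closed[OF I] unfolding b_def by auto
  ultimately show ?thesis unfolding U_def a_def by (metis UnI1)
qed

locale nonunital_quotient =
  fixes S :: "('a, 'b) ring_scheme" (structure) and I :: "'a set"
  assumes nonunital_ring: "nonunital_ring S" and ideal: "nonunital_ideal I S"
begin

lemma m_closed: "x \<in> carrier S \<Longrightarrow> y \<in> carrier S \<Longrightarrow> x \<otimes> y \<in> carrier S"
  using nonunital_ring unfolding nonunital_ring_def by blast

lemma l_distr:
  "x \<in> carrier S \<Longrightarrow> y \<in> carrier S \<Longrightarrow> z \<in> carrier S \<Longrightarrow> (x \<oplus> y) \<otimes> z = x \<otimes> z \<oplus> y \<otimes> z"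
  using nonunital_ring unfolding nonunital_ring_def by blast

lemma r_distr:
  "x \<in> carrier S \<Longrightarrow> y \<in> carrier S \<Longrightarrow> z \<in> carrier S \<Longrightarrow> z \<otimes> (x \<oplus> y) = z \<otimes> x \<oplus> z \<otimes> y"
  using nonunital_ring unfolding nonunital_ring_def by blast

lemma I_l_closed: "a \<in> I \<Longrightarrow> x \<in> carrier S \<Longrightarrow> x \<otimes> a \<in> I"
  using ideal unfolding nonunital_ideal_def by blast

lemma I_r_closed: "a \<in> I \<Longrightarrow> x \<in> carrier S \<Longrightarrow> a \<otimes> x \<in> I"
  using ideal unfolding nonunital_ideal_def by blast

lemma abelian_group: "abelian_group S"
  using nonunital_ring unfolding nonunital_ring_def by blast

lemma additive_subgroup: "additive_subgroup I S"
  using ideal unfolding nonunital_ideal_def by blast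

sublocale abelian_subgroup I S
  by (rule abelian_subgroupI3[OF additive_subgroup abelian_group])

abbreviation Q :: "'a set ring" where "Q \<equiv> S Quot I"

definition qproj :: "'a \<Rightarrow> 'a set" where "qproj x = I +> x"

lemma quot_add_monoid: "add_monoid Q = S A_Mod I"
  by (simp add: FactRing_def A_FactGroup_def FactGroup_def A_RCOSETS_def set_add_def)

sublocale Q: abelian_group Q
proof -
  have "comm_group (add_monoid Q)"
    using quot_add_monoid a_factorgroup_is_comm_group by simp
  then show "abelian_group Q"
    by (simp add: abelian_group_def abelian_group_axioms_def abelian_monoid_def comm_group.axioms(1))
qed

lemma quot_carrier: "carrier Q = qproj ` carrier S"
  by (auto simp: FactRing_def A_RCOSETS_def RCOSETS_def qproj_def a_r_coset_def)

lemma qproj_closed: "x \<in> carrier S \<Longrightarrow> qproj x \<in> carrier Q"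
  using quot_carrier by auto

lemma qproj_eq_zero_iff: "x \<in> carrier S \<Longrightarrow> qproj x = \<zero>\<^bsub>Q\<^esub> \<longleftrightarrow> x \<in> I"
  unfolding qproj_def FactRing_def by (metis a_rcos_const a_rcos_self ring.simps(1))

lemma qproj_add:
  "x \<in> carrier S \<Longrightarrow> y \<in> carrier S \<Longrightarrow> qproj x \<oplus>\<^bsub>Q\<^esub> qproj y = qproj (x \<oplus> y)"
  using a_rcos_sum by (simp add: FactRing_def qproj_def)

lemma rcos_mult_mem:
  assumes x: "x \<in> carrier S" and y: "y \<in> carrier S" and a: "a \<in> I +> x" and b: "b \<in> I +> y"
  shows "a \<otimes> b \<in> I +> (x \<otimes> y)"
proof -
  obtain i j where ij: "i \<in> I" "j \<in> I" and ab: "a = i \<oplus> x" "b = j \<oplus> y"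
    using a b by (auto simp: a_r_coset_def r_coset_def)
  then have ijS: "i \<in> carrier S" "j \<in> carrier S" by auto
  have "a \<otimes> b = (i \<otimes> (j \<oplus> y) \<oplus> x \<otimes> j) \<oplus> x \<otimes> y"
    using ijS x y by (simp add: ab l_distr r_distr m_closed a_ac)
  moreover have "i \<otimes> (j \<oplus> y) \<oplus> x \<otimes> j \<in> I"
    using ij ijS x y by (simp add: I_l_closed I_r_closed)
  ultimately show ?thesis
    by (auto simp: a_r_coset_def r_coset_def)
qed

lemma qproj_mult:
  assumes x: "x \<in> carrier S" and y: "y \<in> carrier S"
  shows "qproj x \<otimes>\<^bsub>Q\<^esub> qproj y = qproj (x \<otimes> y)"
proof -
  have "I +> (a \<otimes> b) = I +> (x \<otimes> y)" if "a \<in> I +> x" "b \<in> I +> y" for a b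
    by (rule a_repr_independence[symmetric])
      (use rcos_mult_mem[OF x y that] x y m_closed a_subgroup in auto)
  moreover have "x \<in> I +> x" "y \<in> I +> y" using x y a_rcos_self by auto
  ultimately have "(\<Union>a\<in>I +> x. \<Union>b\<in>I +> y. I +> (a \<otimes> b)) = I +> (x \<otimes> y)"
    by blast
  then show ?thesis unfolding qproj_def FactRing_def rcoset_mult_def by simp
qed

lemma qproj_finsum:
  assumes "finite F" "f \<in> F \<rightarrow> carrier S"
  shows "finsum Q (\<lambda>g. qproj (f g)) F = qproj (finsum S f F)"
  using assms
proof (induction F rule: finite_induct)
  case empty
  then show ?case using qproj_eq_zero_iff[of \<zero>] by simp
next
  case (insert a F)
  then have "finsum Q (\<lambda>g. qproj (f g)) (insert a F) = qproj (f a) \<oplus>\<^bsub>Q\<^esub> qproj (finsum S f F)"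
    by (subst Q.finsum_insert) (auto simp: Pi_iff intro!: qproj_closed)
  also have "\<dots> = qproj (finsum S f (insert a F))"
    using insert by (simp add: qproj_add finsum_closed)
  finally show ?case .
qed

lemma qproj_finsum_products:
  fixes n :: nat
  assumes "\<forall>i<n. f i \<in> carrier S \<and> h i \<in> carrier S"
  shows "finsum Q (\<lambda>i. qproj (f i) \<otimes>\<^bsub>Q\<^esub> qproj (h i)) {..<n} = qproj (finsum S (\<lambda>i. f i \<otimes> h i) {..<n})"
proof -
  have "finsum Q (\<lambda>i. qproj (f i) \<otimes>\<^bsub>Q\<^esub> qproj (h i)) {..<n} = finsum Q (\<lambda>i. qproj (f i \<otimes> h i)) {..<n}"
    using assms by (intro Q.finsum_cong') (auto simp: qproj_mult qproj_closed m_closed)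
  also have "\<dots> = qproj (finsum S (\<lambda>i. f i \<otimes> h i) {..<n})"
    using assms by (intro qproj_finsum) (auto simp: m_closed)
  finally show ?thesis .
qed

lemma ring_subset_prod_closed:
  "X \<subseteq> carrier S \<Longrightarrow> Y \<subseteq> carrier S \<Longrightarrow> ring_subset_prod S X Y \<subseteq> carrier S"
  unfolding ring_subset_prod_def by (auto intro!: finsum_closed m_closed)

lemma ring_subset_prod_image_qproj:
  assumes X: "X \<subseteq> carrier S" and Y: "Y \<subseteq> carrier S"
  shows "ring_subset_prod Q (qproj ` X) (qproj ` Y) = qproj ` ring_subset_prod S X Y"
proof (intro equalityI subsetI)
  fix z assume "z \<in> ring_subset_prod Q (qproj ` X) (qproj ` Y)"
  then obtain n :: nat and f h where z: "z = finsum Q (\<lambda>i. f i \<otimes>\<^bsub>Q\<^esub> h i) {..<n}"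
    and fh: "\<forall>i<n. f i \<in> qproj ` X \<and> h i \<in> qproj ` Y"
    by (rule ring_subset_prodE)
  define f' where "f' i = inv_into X qproj (f i)" for i
  define h' where "h' i = inv_into Y qproj (h i)" for i
  have f'h': "\<forall>i<n. f' i \<in> X \<and> f i = qproj (f' i) \<and> h' i \<in> Y \<and> h i = qproj (h' i)"
    using fh by (simp add: f'_def h'_def inv_into_into f_inv_into_f)
  then have f'h'S: "\<forall>i<n. f' i \<in> carrier S \<and> h' i \<in> carrier S"
    using X Y by blast
  have "z = finsum Q (\<lambda>i. qproj (f' i) \<otimes>\<^bsub>Q\<^esub> qproj (h' i)) {..<n}"
    unfolding z using f'h' f'h'S by (intro Q.finsum_cong') (auto simp: qproj_mult qproj_closed m_closed)
  also have "\<dots> = qproj (finsum S (\<lambda>i. f' i \<otimes> h' i) {..<n})"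
    using f'h'S by (rule qproj_finsum_products)
  finally show "z \<in> qproj ` ring_subset_prod S X Y"
    using f'h' by (simp add: ring_subset_prodI)
next
  fix z assume "z \<in> qproj ` ring_subset_prod S X Y"
  then obtain w where z: "z = qproj w" and "w \<in> ring_subset_prod S X Y" by blast
  from this(2) obtain n :: nat and f h where w: "w = finsum S (\<lambda>i. f i \<otimes> h i) {..<n}"
    and fh: "\<forall>i<n. f i \<in> X \<and> h i \<in> Y"
    by (rule ring_subset_prodE)
  have "z = finsum Q (\<lambda>i. qproj (f i) \<otimes>\<^bsub>Q\<^esub> qproj (h i)) {..<n}"
    unfolding z w using fh X Y by (subst qproj_finsum_products) auto
  then show "z \<in> ring_subset_prod Q (qproj ` X) (qproj ` Y)"
    using fh by (simp add: ring_subset_prodI)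
qed

lemma additive_subgroup_image_qproj:
  assumes "additive_subgroup H S"
  shows "additive_subgroup (qproj ` H) Q"
proof -
  have "group_hom (add_monoid S) (add_monoid Q) qproj"
    using a_r_coset_hom_A_Mod quot_add_monoid Q.a_group abelian_group.a_group[OF abelian_group]
    by (simp add: group_hom_def group_hom_axioms_def qproj_def[abs_def])
  then show ?thesis using assms
    by (simp add: additive_subgroup_def group_hom.subgroup_img_is_subgroup)
qed

lemma quot_components_zero:
  assumes gr: "graded S G A" and hom: "homogeneous_ideal S G A I"
    and F: "finite F" "F \<subseteq> carrier G" and fA: "\<forall>g\<in>F. f g \<in> qproj ` A g"
    and f0: "finsum Q f F = \<zero>\<^bsub>Q\<^esub>"
  shows "\<forall>g\<in>F. f g = \<zero>\<^bsub>Q\<^esub>"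
proof -
  have "\<forall>g\<in>F. \<exists>y. y \<in> A g \<and> f g = qproj y" using fA by blast
  then obtain f' where f': "\<forall>g\<in>F. f' g \<in> A g \<and> f g = qproj (f' g)"
    by (rule bchoice[THEN exE])
  have f'S: "f' \<in> F \<rightarrow> carrier S" using f' F(2) graded_subset_carrier[OF gr] by blast
  have "finsum Q f F = finsum Q (\<lambda>g. qproj (f' g)) F"
    using f' f'S by (intro Q.finsum_cong') (auto simp: Pi_iff intro!: qproj_closed)
  also have "\<dots> = qproj (finsum S f' F)"
    using F(1) f'S by (rule qproj_finsum)
  finally have "finsum S f' F \<in> I"
    using f0 qproj_eq_zero_iff[OF finsum_closed[OF f'S]] by simp
  then have "\<forall>g\<in>F. f' g \<in> I"
    using homogeneous_ideal_components_mem[OF abelian_group gr hom additive_subgroup F] f' by blast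
  then show ?thesis using f' f'S qproj_eq_zero_iff by auto
qed

lemma graded_quotient:
  assumes gr: "graded S G A" and hom: "homogeneous_ideal S G A I"
  shows "graded Q G (\<lambda>g. qproj ` A g)"
proof -
  note AS = graded_subset_carrier[OF gr]
  have "\<forall>g\<in>carrier G. additive_subgroup (qproj ` A g) Q"
    using graded_additive_subgroup[OF gr] additive_subgroup_image_qproj by blast
  moreover have "\<forall>g\<in>carrier G. \<forall>h\<in>carrier G.
      ring_subset_prod Q (qproj ` A g) (qproj ` A h) \<subseteq> qproj ` A (g \<otimes>\<^bsub>G\<^esub> h)"
  proof (intro ballI)
    fix g h assume gh: "g \<in> carrier G" "h \<in> carrier G"
    have "ring_subset_prod Q (qproj ` A g) (qproj ` A h) = qproj ` ring_subset_prod S (A g) (A h)"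
      using gh AS by (intro ring_subset_prod_image_qproj)
    also have "\<dots> \<subseteq> qproj ` A (g \<otimes>\<^bsub>G\<^esub> h)"
      using gh graded_ring_subset_prod[OF gr] by (intro image_mono)
    finally show "ring_subset_prod Q (qproj ` A g) (qproj ` A h) \<subseteq> qproj ` A (g \<otimes>\<^bsub>G\<^esub> h)" .
  qed
  moreover have "\<exists>F f. finite F \<and> F \<subseteq> carrier G \<and> (\<forall>g\<in>F. f g \<in> qproj ` A g) \<and> x = finsum Q f F"
    if x: "x \<in> carrier Q" for x
  proof -
    obtain y where y: "x = qproj y" "y \<in> carrier S"
      using x unfolding quot_carrier by (rule imageE)
    obtain F f where F: "finite F" "F \<subseteq> carrier G" "\<forall>g\<in>F. f g \<in> A g" "y = finsum S f F"
      using graded_decomposition[OF gr y(2)] .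
    then have "x = finsum Q (\<lambda>g. qproj (f g)) F"
      using y AS by (subst qproj_finsum) auto
    with F show ?thesis by (intro exI[of _ F] exI[of _ "\<lambda>g. qproj (f g)"]) auto
  qed
  moreover have "\<forall>g\<in>F. f g = \<zero>\<^bsub>Q\<^esub>"
    if "finite F" "F \<subseteq> carrier G" "\<forall>g\<in>F. f g \<in> qproj ` A g" "finsum Q f F = \<zero>\<^bsub>Q\<^esub>" for F f
    using quot_components_zero[OF gr hom that] .
  ultimately show ?thesis unfolding graded_def by meson
qed

lemma epsilon_strong_quotient:
  assumes G: "group G" and es: "epsilon_strong S G A" and hom: "homogeneous_ideal S G A I"
  shows "epsilon_strong Q G (\<lambda>g. qproj ` A g)"
proof -
  have gr: "graded S G A" using es by (rule epsilon_strong_graded)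
  note AS = graded_subset_carrier[OF gr]
  have "ring_subset_prod Q (ring_subset_prod Q (qproj ` A g) (qproj ` A (inv\<^bsub>G\<^esub> g))) (qproj ` A g) = qproj ` A g
    \<and> (\<exists>e\<in>ring_subset_prod Q (qproj ` A g) (qproj ` A (inv\<^bsub>G\<^esub> g)).
         \<forall>x\<in>ring_subset_prod Q (qproj ` A g) (qproj ` A (inv\<^bsub>G\<^esub> g)). e \<otimes>\<^bsub>Q\<^esub> x = x \<and> x \<otimes>\<^bsub>Q\<^esub> e = x)"
    if g: "g \<in> carrier G" for g
  proof -
    define P where "P = ring_subset_prod S (A g) (A (inv\<^bsub>G\<^esub> g))"
    have ginv: "inv\<^bsub>G\<^esub> g \<in> carrier G" using G g by (rule group.inv_closed)
    have PS: "P \<subseteq> carrier S" unfolding P_def using ring_subset_prod_closed AS g ginv by blast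
    have image_P: "ring_subset_prod Q (qproj ` A g) (qproj ` A (inv\<^bsub>G\<^esub> g)) = qproj ` P"
      unfolding P_def using ring_subset_prod_image_qproj AS g ginv by blast
    obtain e where e: "e \<in> P" "\<forall>x\<in>P. e \<otimes> x = x \<and> x \<otimes> e = x"
      using epsilon_strong_identity[OF es g] unfolding P_def by blast
    have "\<forall>x\<in>P. qproj e \<otimes>\<^bsub>Q\<^esub> qproj x = qproj x \<and> qproj x \<otimes>\<^bsub>Q\<^esub> qproj e = qproj x"
      using e PS by (simp add: qproj_mult subset_iff)
    moreover have "ring_subset_prod Q (qproj ` P) (qproj ` A g) = qproj ` A g"
      using ring_subset_prod_image_qproj[OF PS AS[OF g]] epsilon_strong_ring_subset_prod_eq[OF es g]
      unfolding P_def by simp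
    ultimately show ?thesis unfolding image_P using e by blast
  qed
  with graded_quotient[OF gr hom] show ?thesis by (simp add: epsilon_strong_def)
qed

end

theorem proposition3p11:
  fixes G :: "('g, 'c) monoid_scheme" and S :: "('a, 'b) ring_scheme"
    and A :: "'g \<Rightarrow> 'a set" and I :: "'a set"
  assumes "group G"
    and "nonunital_ring S"
    and "epsilon_strong S G A"
    and "nonunital_ideal I S"
    and "homogeneous_ideal S G A I"
  shows "epsilon_strong (S Quot I) G (quot_grading S A I)"
proof -
  interpret nonunital_quotient S I
    using assms(2,4) by (rule nonunital_quotient.intro)
  have "quot_grading S A I = (\<lambda>g. qproj ` A g)"
    by (simp add: quot_grading_def qproj_def fun_eq_iff)
  then show ?thesis
    using epsilon_strong_quotient assms(1,3,5) by simp
qed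

end
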